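(* The set of elements $(d,e;m)\in\mathcal{E}$ with $d\geq e$ whose vector $m$ has at most $7$ nonzero entries is finite, and consists exactly of $$(0,0;-1),\ (1,0;1),\ (1,1;1^{\times3}),\ (2,1;1^{\times5}),\ (2,2;2,1^{\times5}),$$ $$(3,1;1^{\times7}),\ (3,2;2^{\times2},1^{\times5}),\ (3,3;2^{\times4},1^{\times3}),\ (4,3;2^{\times6},1),\ (4,4;3,2^{\times6}).$$
   Context: Notation: $x^{\times l}$ denotes $x$ repeated $l$ times; trailing zeros of $m$ are ignored. The set $\mathcal{E}$: a Cremona transform of an integer tuple $(\delta;n_1,\dots,n_k)$ with $n_1\geq\dots\geq n_k$ is $(2\delta-n_1-n_2-n_3;\delta-n_2-n_3,\delta-n_1-n_3,\delta-n_1-n_2,n_4,\dots,n_k)$; a Cremona move is a Cremona transform followed by a permutation of the entries after the semicolon. $\mathcal{E}$ consists of $(0,0;-1)$ together with all integer tuples $(d,e;m_1,\dots,m_M)$ with $d,e\geq0$, $m_1\geq\dots\geq m_M\geq0$, satisfying $\sum m_i=2(d+e)-1$, $\sum m_i^2=2de+1$, and such that $(d+e-m_1;d-m_1,e-m_1,m_2,\dots,m_M)$ reduces to $(0;-1,0,\dots,0)$ by repeated Cremona moves. (Equivalently, classes $dS_1+eS_2-\sum m_iF_i$ in the $M$-fold blow-up of $S^2\times S^2$ represented by symplectically embedded $(-1)$-spheres.) $\mathcal{E}$ is symmetric under swapping $d$ and $e$. *)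

theory Defs
  imports Main "HOL-Library.Multiset"
begin

text \<open>A tuple (delta; n_1,...,n_k) is represented as a pair of an integer and an
  integer list.  Cremona transform of a tuple whose entries are sorted decreasingly
  (at least three entries; trailing zeros may be appended freely, see below).\<close>

fun cremona_transform :: "int \<Rightarrow> int list \<Rightarrow> int \<times> int list" where
  "cremona_transform \<delta> (n1 # n2 # n3 # rest) =
     (2 * \<delta> - n1 - n2 - n3, (\<delta> - n2 - n3) # (\<delta> - n1 - n3) # (\<delta> - n1 - n2) # rest)"
| "cremona_transform \<delta> ns = (\<delta>, ns)"

inductive cremona_reduces :: "int \<times> int list \<Rightarrow> int \<times> int list \<Rightarrow> bool" where
  refl: "cremona_reduces x x"
| perm: "mset ns' = mset ns \<Longrightarrow> cremona_reduces (\<delta>, ns') y \<Longrightarrow> cremona_reduces (\<delta>, ns) y"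
| pad: "cremona_reduces (\<delta>, ns @ [0]) y \<Longrightarrow> cremona_reduces (\<delta>, ns) y"
| unpad: "cremona_reduces (\<delta>, ns) y \<Longrightarrow> cremona_reduces (\<delta>, ns @ [0]) y"
| move: "sorted_wrt (\<ge>) ns \<Longrightarrow> length ns \<ge> 3 \<Longrightarrow>
         cremona_reduces (cremona_transform \<delta> ns) y \<Longrightarrow> cremona_reduces (\<delta>, ns) y"

definition exc_classes :: "(int \<times> int \<times> int list) set" where
  "exc_classes = {(0, 0, [-1])} \<union>
     {(d, e, m). d \<ge> 0 \<and> e \<ge> 0 \<and> sorted_wrt (\<ge>) m \<and> (\<forall>x\<in>set m. x \<ge> 0) \<and>
        sum_list m = 2 * (d + e) - 1 \<and>
        sum_list (map (\<lambda>x. x ^ 2) m) = 2 * d * e + 1 \<and>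
        (\<exists>m1 rest. m = m1 # rest \<and>
           cremona_reduces (d + e - m1, (d - m1) # (e - m1) # rest) (0, [-1]))}"

end

theory Submission
  imports Defs
begin

text \<open>Only the two numerical conditions are needed to cut the list down. With at most seven
  nonzero entries, Cauchy--Schwarz gives \<open>(2(d+e) - 1)\<^sup>2 \<le> 7(2de + 1) \<le> 7((d+e)\<^sup>2/2 + 1)\<close>,
  hence \<open>d + e \<le> 9\<close>, and an exhaustive search over decreasing positive vectors of length at
  most 7 leaves exactly the listed classes. Conversely, each listed class is carried to
  \<open>(0; -1)\<close> by at most four Cremona moves applied to the decreasingly sorted entries.\<close>

lemma sum_list_affine_squares:
  fixes xs :: "'a::comm_ring_1 list"
  shows "(\<Sum>x\<leftarrow>xs. (a * x - b)^2) =
    a^2 * (\<Sum>x\<leftarrow>xs. x^2) - 2 * a * b * sum_list xs + of_nat (length xs) * b^2"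
  by (induction xs) (simp_all add: algebra_simps power2_eq_square)

lemma sum_list_squared_le:
  fixes xs :: "'a::linordered_idom list"
  shows "(sum_list xs)^2 \<le> of_nat (length xs) * (\<Sum>x\<leftarrow>xs. x^2)"
proof (cases "xs = []")
  case False
  let ?n = "of_nat (length xs) :: 'a"
  have "0 \<le> (\<Sum>x\<leftarrow>xs. (?n * x - sum_list xs)^2)" by (intro sum_list_nonneg) auto
  also have "\<dots> = ?n * (?n * (\<Sum>x\<leftarrow>xs. x^2) - (sum_list xs)^2)"
    unfolding sum_list_affine_squares by (simp add: algebra_simps power2_eq_square)
  finally show ?thesis using False by (simp add: zero_le_mult_iff)
qed simp

lemma degree_bound_of_length_le_7:
  fixes d e :: int and m :: "int list"
  assumes "length m \<le> 7" "sum_list m = 2 * (d + e) - 1" "(\<Sum>x\<leftarrow>m. x^2) = 2 * d * e + 1"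
  shows "d + e \<le> 9"
proof -
  have "(2 * (d + e) - 1)^2 \<le> of_nat (length m) * (2 * d * e + 1)"
    using sum_list_squared_le[of m] assms(2,3) by simp
  also have "\<dots> \<le> 7 * (2 * d * e + 1)"
  proof (rule mult_right_mono)
    have "0 \<le> (\<Sum>x\<leftarrow>m. x^2)" by (intro sum_list_nonneg) auto
    then show "0 \<le> 2 * d * e + 1" using assms(3) by simp
  qed (use assms(1) in simp)
  finally have cs: "(2 * (d + e) - 1)^2 \<le> 7 * (2 * d * e + 1)" .
  have amgm: "4 * d * e \<le> (d + e)^2"
    using zero_le_power2[of "d - e"] by (simp add: algebra_simps power2_eq_square)
  show ?thesis
  proof (rule ccontr)
    assume "\<not> d + e \<le> 9"
    then have "10 * 2 \<le> (d + e) * (d + e - 8)" by (intro mult_mono) auto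
    then show False using cs amgm by (simp add: algebra_simps power2_eq_square)
  qed
qed

fun sum_sq_partitions :: "nat \<Rightarrow> int \<Rightarrow> int \<Rightarrow> int \<Rightarrow> int list list" where
  "sum_sq_partitions 0 b s q = (if s = 0 \<and> q = 0 then [[]] else [])"
| "sum_sq_partitions (Suc k) b s q = (if s = 0 \<and> q = 0 then [[]] else []) @
     [x # xs. x \<leftarrow> [1..min b s], x^2 \<le> q, xs \<leftarrow> sum_sq_partitions k x (s - x) (q - x^2)]"

lemma in_sum_sq_partitions:
  assumes "sorted_wrt (\<ge>) xs" "\<forall>x\<in>set xs. 0 < x \<and> x \<le> b" "length xs \<le> k"
    "sum_list xs = s" "(\<Sum>x\<leftarrow>xs. x^2) = q"
  shows "xs \<in> set (sum_sq_partitions k b s q)"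
  using assms
proof (induction k arbitrary: xs b s q)
  case 0
  then show ?case by simp
next
  case (Suc k)
  show ?case
  proof (cases xs)
    case Nil
    then show ?thesis using Suc.prems by simp
  next
    case (Cons x ys)
    have "0 \<le> sum_list ys" using Suc.prems(2) Cons by (intro sum_list_nonneg) auto
    moreover have "0 \<le> (\<Sum>y\<leftarrow>ys. y^2)" by (intro sum_list_nonneg) auto
    ultimately have "x \<in> set [1..min b s]" "x^2 \<le> q" using Suc.prems Cons by auto
    moreover have "ys \<in> set (sum_sq_partitions k x (s - x) (q - x^2))"
      using Suc.prems Cons by (intro Suc.IH) auto
    ultimately show ?thesis using Cons by auto
  qed
qed

definition diophantine_candidates :: "(int \<times> int \<times> int list) list" where
  "diophantine_candidates = [(d, e, m). d \<leftarrow> [0..9], e \<leftarrow> [0..min d (9 - d)],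
     m \<leftarrow> sum_sq_partitions 7 (2 * (d + e) - 1) (2 * (d + e) - 1) (2 * d * e + 1)]"

lemma diophantine_candidates_eq:
  "diophantine_candidates = [(1, 0, [1]), (1, 1, replicate 3 1), (2, 1, replicate 5 1),
        (2, 2, 2 # replicate 5 1), (3, 1, replicate 7 1), (3, 2, replicate 2 2 @ replicate 5 1),
        (3, 3, replicate 4 2 @ replicate 3 1), (4, 3, replicate 6 2 @ [1]),
        (4, 4, 3 # replicate 6 2)]"
  unfolding diophantine_candidates_def by code_simp

lemma sum_list_filter_nonzero:
  "f 0 = 0 \<Longrightarrow> (\<Sum>x\<leftarrow>filter (\<lambda>x. x \<noteq> 0) xs. f x) = (\<Sum>x\<leftarrow>xs. f x)"
  by (induction xs) auto

lemma nonzero_part_in_diophantine_candidates: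
  assumes "(d, e, m) \<in> exc_classes" "(d, e, m) \<noteq> (0, 0, [-1])" "e \<le> d"
    "length (filter (\<lambda>x. x \<noteq> 0) m) \<le> 7"
  shows "(d, e, filter (\<lambda>x. x \<noteq> 0) m) \<in> set diophantine_candidates"
proof -
  define n where "n = filter (\<lambda>x. x \<noteq> 0) m"
  from assms(1,2) have "0 \<le> e" "sorted_wrt (\<ge>) m" "\<forall>x\<in>set m. 0 \<le> x"
    "sum_list m = 2 * (d + e) - 1" "(\<Sum>x\<leftarrow>m. x^2) = 2 * d * e + 1"
    unfolding exc_classes_def by auto
  then have e: "0 \<le> e" and sorted: "sorted_wrt (\<ge>) n" and pos: "\<forall>x\<in>set n. 0 < x"
    and sum: "sum_list n = 2 * (d + e) - 1" and sum_sq: "(\<Sum>x\<leftarrow>n. x^2) = 2 * d * e + 1"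
    using sum_list_filter_nonzero[of id m] sum_list_filter_nonzero[of "\<lambda>x. x^2" m]
    by (auto simp: n_def sorted_wrt_filter)
  have len: "length n \<le> 7" using assms(4) by (simp add: n_def)
  have "\<forall>x\<in>set n. x \<le> 2 * (d + e) - 1"
    using pos sum by (metis less_imp_le member_le_sum_list)
  then have "n \<in> set (sum_sq_partitions 7 (2 * (d + e) - 1) (2 * (d + e) - 1) (2 * d * e + 1))"
    using pos by (intro in_sum_sq_partitions[OF sorted _ len sum sum_sq]) auto
  moreover have "d + e \<le> 9" using degree_bound_of_length_le_7[OF len sum sum_sq] .
  ultimately show ?thesis using e assms(3) unfolding diophantine_candidates_def n_def by fastforce
qed

lemma cremona_reduces_append_zeros:
  "cremona_reduces (\<delta>, ns) y \<Longrightarrow> cremona_reduces (\<delta>, ns @ replicate k 0) y"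
proof (induction k)
  case (Suc k)
  then show ?case
    using cremona_reduces.unpad[of \<delta> "ns @ replicate k 0"] by (simp add: replicate_append_same)
qed simp

lemma cremona_reduces_exceptional:
  assumes "filter (\<lambda>x. x \<noteq> 0) ns = [-1]"
  shows "cremona_reduces (0, ns) (0, [-1])"
proof (rule cremona_reduces.perm)
  let ?zeros = "filter (\<lambda>x. x = 0) ns"
  have "mset ns = mset (filter (\<lambda>x. x \<noteq> 0) ns) + mset ?zeros"
    by (simp add: union_filter_mset_complement)
  then show "mset ([-1] @ ?zeros) = mset ns" by (simp add: assms)
  have "?zeros = replicate (length ?zeros) 0"
    using replicate_length_filter[of 0 ns] by simp
  then show "cremona_reduces (0, [-1] @ ?zeros) (0, [-1])"
    by (metis cremona_reduces_append_zeros cremona_reduces.refl)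
qed

lemma cremona_reduces_sorted_move:
  "3 \<le> length ns \<Longrightarrow> cremona_reduces (cremona_transform \<delta> (rev (sort ns))) y \<Longrightarrow>
   cremona_reduces (\<delta>, ns) y"
  by (rule cremona_reduces.perm[of "rev (sort ns)"])
    (auto intro: cremona_reduces.move simp: sorted_wrt_rev)

fun cremona_greedy :: "nat \<Rightarrow> int \<times> int list \<Rightarrow> int \<times> int list" where
  "cremona_greedy 0 x = x"
| "cremona_greedy (Suc k) (\<delta>, ns) =
     (if \<delta> \<le> 0 \<or> length ns < 3 then (\<delta>, ns)
      else cremona_greedy k (cremona_transform \<delta> (rev (sort ns))))"

lemma cremona_reduces_greedy:
  "cremona_reduces (cremona_greedy k x) y \<Longrightarrow> cremona_reduces x y"
  by (induction k x rule: cremona_greedy.induct)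
    (auto split: if_splits intro: cremona_reduces_sorted_move)

lemma exc_classesI:
  assumes "0 \<le> d" "0 \<le> e" "sorted_wrt (\<ge>) (m1 # ms)" "\<forall>x\<in>set (m1 # ms). 0 \<le> x"
    "sum_list (m1 # ms) = 2 * (d + e) - 1" "(\<Sum>x\<leftarrow>m1 # ms. x^2) = 2 * d * e + 1"
    "fst (cremona_greedy k (d + e - m1, (d - m1) # (e - m1) # ms)) = 0"
    "filter (\<lambda>x. x \<noteq> 0)
       (snd (cremona_greedy k (d + e - m1, (d - m1) # (e - m1) # ms))) = [-1]"
  shows "(d, e, m1 # ms) \<in> exc_classes"
proof -
  let ?x = "(d + e - m1, (d - m1) # (e - m1) # ms)"
  have "cremona_reduces (cremona_greedy k ?x) (0, [-1])"
    using assms(7,8) cremona_reduces_exceptional by (metis prod.collapse)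
  then have "cremona_reduces ?x (0, [-1])" by (rule cremona_reduces_greedy)
  with assms(1-6) show ?thesis unfolding exc_classes_def by auto
qed

lemma diophantine_candidates_subset_exc_classes: "set diophantine_candidates \<subseteq> exc_classes"
  unfolding diophantine_candidates_eq
  by (simp add: numeral_eq_Suc)
    (intro conjI exc_classesI[where k = 4]; simp add: numeral_eq_Suc)

definition short_exc_classes :: "(int \<times> int \<times> int list) set" where
  "short_exc_classes = {(d, e, filter (\<lambda>x. x \<noteq> 0) m) | d e m.
     (d, e, m) \<in> exc_classes \<and> d \<ge> e \<and> length (filter (\<lambda>x. x \<noteq> 0) m) \<le> 7}"

lemma short_exc_classesI:
  assumes "(d, e, m) \<in> exc_classes" "e \<le> d" "0 \<notin> set m" "length m \<le> 7"
  shows "(d, e, m) \<in> short_exc_classes"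
proof -
  have "filter (\<lambda>x. x \<noteq> 0) m = m" using assms(3) by (auto simp: filter_id_conv)
  then show ?thesis
    unfolding short_exc_classes_def mem_Collect_eq using assms
    by (intro exI[of _ d] exI[of _ e] exI[of _ m]) simp
qed

lemma short_exc_classes_subset:
  "short_exc_classes \<subseteq> insert (0, 0, [-1]) (set diophantine_candidates)"
proof
  fix t assume "t \<in> short_exc_classes"
  then obtain d e m where "t = (d, e, filter (\<lambda>x. x \<noteq> 0) m)" "(d, e, m) \<in> exc_classes"
    "e \<le> d" "length (filter (\<lambda>x. x \<noteq> 0) m) \<le> 7"
    unfolding short_exc_classes_def by blast
  then show "t \<in> insert (0, 0, [-1]) (set diophantine_candidates)"
    using nonzero_part_in_diophantine_candidates[of d e m]
    by (cases "(d, e, m) = (0, 0, [-1])") auto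
qed

lemma diophantine_candidates_subset_short_exc_classes:
  "set diophantine_candidates \<subseteq> short_exc_classes"
proof
  fix t assume t: "t \<in> set diophantine_candidates"
  obtain d e m where t_eq: "t = (d, e, m)" by (cases t)
  have "e \<le> d" "0 \<notin> set m" "length m \<le> 7"
    using t unfolding t_eq by (auto simp: diophantine_candidates_eq)
  moreover have "(d, e, m) \<in> exc_classes"
    using t t_eq diophantine_candidates_subset_exc_classes by auto
  ultimately show "t \<in> short_exc_classes" unfolding t_eq by (intro short_exc_classesI)
qed

theorem lemma4p3:
  "finite {(d, e, filter (\<lambda>x. x \<noteq> 0) m) | d e m.
             (d, e, m) \<in> exc_classes \<and> d \<ge> e \<and> length (filter (\<lambda>x. x \<noteq> 0) m) \<le> 7}
   \<and> {(d, e, filter (\<lambda>x. x \<noteq> 0) m) | d e m.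
             (d, e, m) \<in> exc_classes \<and> d \<ge> e \<and> length (filter (\<lambda>x. x \<noteq> 0) m) \<le> 7}
     = {(0, 0, [-1]), (1, 0, [1]), (1, 1, replicate 3 1), (2, 1, replicate 5 1),
        (2, 2, 2 # replicate 5 1), (3, 1, replicate 7 1), (3, 2, replicate 2 2 @ replicate 5 1),
        (3, 3, replicate 4 2 @ replicate 3 1), (4, 3, replicate 6 2 @ [1]),
        (4, 4, 3 # replicate 6 2)}"
proof -
  have "(0, 0, [-1]) \<in> short_exc_classes"
    by (rule short_exc_classesI) (simp_all add: exc_classes_def)
  then have short_exc_classes_eq:
    "short_exc_classes = insert (0, 0, [-1]) (set diophantine_candidates)"
    using short_exc_classes_subset diophantine_candidates_subset_short_exc_classes by blast
  show ?thesis
    unfolding short_exc_classes_def[symmetric] short_exc_classes_eq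
    by (simp add: diophantine_candidates_eq)
qed

end
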